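(* There is a sequence $q_n$ of (Schwartz-class) solutions of $i\partial_t q + \partial_x^2 q + i\partial_x(|q|^2 q)=0$ such that \[ \int_{\mathbb{R}}|q_n(t,x)|^2\,dx = 2\pi \text{ for all } n,t \qquad\text{but}\qquad \int_{-1}^{1}\bigl\|\operatorname{sech}^{12}(x)\,q_n(t,x)\bigr\|_{H^{1/2}_x}^2\,dt\longrightarrow\infty. \]
   Context: $\|f\|_{H^{1/2}}^2=\int(4+\xi^2)^{1/2}|\hat f(\xi)|^2\,d\xi$. *)

theory Defs
  imports "HOL-Analysis.Analysis"
begin

definition schwartz :: "(real \<Rightarrow> complex) \<Rightarrow> bool" where
  "schwartz f \<longleftrightarrow> (\<exists>D :: nat \<Rightarrow> real \<Rightarrow> complex.
      D 0 = f \<and>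
      (\<forall>k x. (D k has_vector_derivative D (Suc k) x) (at x)) \<and>
      (\<forall>j k. bounded (range (\<lambda>x. complex_of_real (x ^ j) * D k x))))"

definition fourier :: "(real \<Rightarrow> complex) \<Rightarrow> real \<Rightarrow> complex" where
  "fourier f \<xi> = complex_of_real (1 / sqrt (2 * pi)) *
      (LINT x|lborel. cis (- (x * \<xi>)) * f x)"

definition H_half_norm_sq :: "(real \<Rightarrow> complex) \<Rightarrow> real" where
  "H_half_norm_sq f = (LINT \<xi>|lborel. sqrt (4 + \<xi>\<^sup>2) * (cmod (fourier f \<xi>))\<^sup>2)"

definition sech :: "real \<Rightarrow> real" where
  "sech x = 1 / cosh x"

definition dnls_schwartz_solution :: "(real \<Rightarrow> real \<Rightarrow> complex) \<Rightarrow> bool" where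
  "dnls_schwartz_solution q \<longleftrightarrow>
     (\<forall>t. schwartz (q t)) \<and>
     (\<exists>qt qx qxx :: real \<Rightarrow> real \<Rightarrow> complex.
        (\<forall>t x. ((\<lambda>s. q s x) has_vector_derivative qt t x) (at t)) \<and>
        (\<forall>t x. ((\<lambda>y. q t y) has_vector_derivative qx t x) (at x)) \<and>
        (\<forall>t x. ((\<lambda>y. qx t y) has_vector_derivative qxx t x) (at x)) \<and>
        continuous_on UNIV (\<lambda>p. q (fst p) (snd p)) \<and>
        continuous_on UNIV (\<lambda>p. qt (fst p) (snd p)) \<and>
        continuous_on UNIV (\<lambda>p. qx (fst p) (snd p)) \<and>
        continuous_on UNIV (\<lambda>p. qxx (fst p) (snd p)) \<and>
        (\<forall>t x. \<i> * qt t x + qxx t x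
               + \<i> * vector_derivative
                      (\<lambda>y. complex_of_real ((cmod (q t y))\<^sup>2) * q t y) (at x) = 0))"

end

theory Submission
  imports Defs "HOL-Probability.Probability" "HOL-Real_Asymp.Real_Asymp"
begin

text \<open>
  The solitons \<open>q\<^sub>b(t, x) = sqrt (2 b sech (b x)) exp (i (b\<^sup>2 t / 4 - 3 arctan (exp (b x))))\<close>
  all have mass \<open>2 pi\<close> but live on the scale \<open>1 / b\<close>. Time enters only through the unimodular
  factor \<open>exp (i b\<^sup>2 t / 4)\<close>, so the time integral is twice the squared \<open>H\<^sup>1\<^sup>/\<^sup>2\<close> norm
  of \<open>f = sech\<^sup>1\<^sup>2 q\<^sub>b(0, \<cdot>)\<close>.

  This norm is bounded below by testing \<open>f\<^sup>^\<close> against the Gaussian \<open>g(\<xi>) = exp (- (\<sigma> \<xi>)\<^sup>2 / 2)\<close>.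
  By Fubini, \<open>\<integral> f\<^sup>^ g = sqrt (2 pi) \<integral> f N\<^sub>\<sigma>\<close> with \<open>N\<^sub>\<sigma>\<close> the centred normal density, which is
  at least \<open>sqrt (2 pi) (|f 0| - \<sigma> sup |f'|)\<close>; for \<open>\<sigma> \<approx> 1 / (4 b)\<close> this is about \<open>sqrt (pi b)\<close>.
  On the other hand Cauchy-Schwarz with the weight \<open>sqrt (4 + \<xi>\<^sup>2)\<close> gives
  \<open>|\<integral> f\<^sup>^ g|\<^sup>2 \<le> \<parallel>f\<parallel>\<^sup>2 \<integral> exp (- (\<sigma> \<xi>)\<^sup>2) / sqrt (4 + \<xi>\<^sup>2)\<close>, and the last integral is \<open>O(log b)\<close>.
  Hence the norm grows like \<open>b / log b\<close>.
\<close>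

section \<open>The hyperbolic secant\<close>

lemma sech_pos: "0 < sech x"
  by (simp add: sech_def)

lemma sech_le_1: "sech x \<le> 1"
  by (simp add: sech_def cosh_real_ge_1)

lemma abs_tanh_le_1: "\<bar>tanh (x::real)\<bar> \<le> 1"
  using tanh_real_bounds[of x] by auto

lemma tanh_square_plus_sech_square: "tanh x ^ 2 + sech x ^ 2 = 1"
proof -
  have "cosh x ^ 2 \<noteq> 0"
    using cosh_real_pos[of x] by simp
  moreover have "tanh x ^ 2 + sech x ^ 2 = (sinh x ^ 2 + 1) / cosh x ^ 2"
    by (simp add: tanh_def sech_def power_divide add_divide_distrib)
  ultimately show ?thesis
    by (simp add: cosh_square_eq)
qed

lemma has_real_derivative_sech_scaled:
  "((\<lambda>x. sech (c * x)) has_real_derivative - c * tanh (c * x) * sech (c * x)) (at x)"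
proof -
  have "cosh (c * x) \<noteq> 0"
    using cosh_real_pos[of "c * x"] by linarith
  then show ?thesis
    unfolding sech_def tanh_def
    by (auto intro!: derivative_eq_intros simp: power2_eq_square field_simps)
qed

lemma has_real_derivative_tanh_scaled:
  "((\<lambda>x. tanh (c * x)) has_real_derivative c * sech (c * x) ^ 2) (at x)"
proof -
  have "cosh (c * x) \<noteq> 0"
    using cosh_real_pos[of "c * x"] by linarith
  then have "((\<lambda>x. tanh (c * x)) has_real_derivative (1 - tanh (c * x) ^ 2) * c) (at x)"
    by (auto intro!: derivative_eq_intros)
  moreover have "(1 - tanh (c * x) ^ 2) * c = c * sech (c * x) ^ 2"
    using tanh_square_plus_sech_square[of "c * x"] by algebra
  ultimately show ?thesis
    by simp
qed

lemma continuous_on_sech [continuous_intros]: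
  "continuous_on S f \<Longrightarrow> continuous_on S (\<lambda>x. sech (f x))"
  unfolding sech_def
  by (auto intro!: continuous_intros simp: less_imp_neq[OF cosh_real_pos, symmetric])

lemma sech_le_2_exp_neg_abs: "sech y \<le> 2 * exp (- \<bar>y\<bar>)"
proof -
  have cosh: "2 * cosh y = exp y + exp (- y)"
    by (simp add: cosh_field_def)
  have "exp \<bar>y\<bar> = exp y \<or> exp \<bar>y\<bar> = exp (- y)"
    by (cases "y \<ge> 0") auto
  moreover have "0 < exp y" "0 < exp (- y)"
    by auto
  ultimately have "exp \<bar>y\<bar> \<le> 2 * cosh y"
    unfolding cosh by linarith
  then have "2 / (2 * cosh y) \<le> 2 / exp \<bar>y\<bar>"
    by (intro divide_left_mono) auto
  moreover have "sech y = 2 / (2 * cosh y)"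
    by (simp add: sech_def)
  moreover have "2 * exp (- \<bar>y\<bar>) = 2 / exp \<bar>y\<bar>"
    by (simp add: exp_minus divide_inverse)
  ultimately show ?thesis
    by simp
qed

lemma power_le_nat_power_mult_exp:
  assumes "0 \<le> y"
  shows "y ^ j \<le> real j ^ j * exp y"
proof (cases "j = 0")
  case True
  then show ?thesis
    using assms by simp
next
  case False
  have "(y / real j) ^ j \<le> (1 + y / real j) ^ j"
    using assms by (intro power_mono) auto
  also have "\<dots> \<le> exp y"
    using exp_ge_one_plus_x_over_n_power_n[of j y] assms False by simp
  finally show ?thesis
    using False by (simp add: power_divide field_simps)
qed

lemma abs_power_mult_sech_le:
  assumes "0 < c"
  shows "\<bar>x\<bar> ^ j * sech (c * x) \<le> 2 * (real j / c) ^ j"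
proof -
  have "\<bar>x\<bar> ^ j = (c * \<bar>x\<bar>) ^ j / c ^ j"
    using assms by (simp add: power_mult_distrib)
  also have "\<dots> \<le> real j ^ j * exp (c * \<bar>x\<bar>) / c ^ j"
    using assms by (intro divide_right_mono power_le_nat_power_mult_exp) auto
  finally have "\<bar>x\<bar> ^ j * sech (c * x) \<le> real j ^ j * exp (c * \<bar>x\<bar>) / c ^ j * (2 * exp (- (c * \<bar>x\<bar>)))"
    using sech_le_2_exp_neg_abs[of "c * x"] assms
    by (intro mult_mono) (auto simp: abs_mult sech_pos less_imp_le)
  also have "\<dots> = 2 * (real j / c) ^ j"
    by (simp add: exp_minus power_divide field_simps)
  finally show ?thesis .
qed

lemma sqrt_sech_le_sech_half: "sqrt (sech y) \<le> sech (y / 2)"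
proof -
  have "cosh (y / 2) ^ 2 \<le> cosh y"
    using cosh_double_cosh[of "y / 2"] cosh_real_ge_1[of "y / 2"] by (simp add: one_le_power)
  then have "sech y \<le> sech (y / 2) ^ 2"
    by (simp add: sech_def power_divide divide_left_mono)
  then show ?thesis
    using real_sqrt_le_mono sech_pos[of "y / 2"] by fastforce
qed

lemma sech_scaled_tendsto_0:
  assumes "0 < c"
  shows "((\<lambda>x. sech (c * x)) \<longlongrightarrow> 0) at_top" "((\<lambda>x. sech (c * x)) \<longlongrightarrow> 0) at_bot"
proof -
  have "filterlim (\<lambda>x. cosh (c * x)) at_top at_top"
    using assms by (auto intro!: filterlim_compose[OF cosh_real_at_top]
        filterlim_tendsto_pos_mult_at_top filterlim_ident)
  then show "((\<lambda>x. sech (c * x)) \<longlongrightarrow> 0) at_top"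
    unfolding sech_def by (simp add: tendsto_inverse_0_at_top flip: inverse_eq_divide)
  have "filterlim (\<lambda>x. cosh (c * x)) at_top at_bot"
    using assms by (auto intro!: filterlim_compose[OF cosh_real_at_bot]
        filterlim_tendsto_pos_mult_at_bot filterlim_ident)
  then show "((\<lambda>x. sech (c * x)) \<longlongrightarrow> 0) at_bot"
    unfolding sech_def by (simp add: tendsto_inverse_0_at_top flip: inverse_eq_divide)
qed

lemma has_real_derivative_arctan_exp_scaled:
  assumes "c \<noteq> 0"
  shows "((\<lambda>x. 2 / c * arctan (exp (c * x))) has_real_derivative sech (c * x)) (at x)"
proof -
  have "((\<lambda>x. 2 / c * arctan (exp (c * x))) has_real_derivative
      2 / c * (inverse (1 + exp (c * x) ^ 2) * (exp (c * x) * c))) (at x)"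
    by (auto intro!: derivative_eq_intros)
  moreover have "inverse (1 + exp (c * x) ^ 2) * exp (c * x) = 1 / (exp (c * x) + exp (- (c * x)))"
    using add_pos_pos[OF exp_gt_zero exp_gt_zero, of "c * x" "- (c * x)"]
    by (simp add: field_simps power2_eq_square exp_minus)
  ultimately show ?thesis
    using assms by (simp add: sech_def cosh_field_def)
qed

lemma has_bochner_integral_sech_scaled:
  assumes "0 < c"
  shows "has_bochner_integral lborel (\<lambda>x. sech (c * x)) (pi / c)"
proof -
  let ?F = "\<lambda>x. 2 / c * arctan (exp (c * x))"
  have "((\<lambda>x. exp (c * x)) \<longlongrightarrow> 0) at_bot"
    using assms by (auto intro!: filterlim_compose[OF exp_at_bot]
        filterlim_tendsto_pos_mult_at_bot filterlim_ident)
  then have "(?F \<longlongrightarrow> 2 / c * arctan 0) at_bot"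
    by (intro tendsto_intros)
  moreover have "filterlim (\<lambda>x. exp (c * x)) at_top at_top"
    using assms by (auto intro!: filterlim_compose[OF exp_at_top]
        filterlim_tendsto_pos_mult_at_top filterlim_ident)
  then have "(?F \<longlongrightarrow> 2 / c * (pi / 2)) at_top"
    by (intro tendsto_intros filterlim_compose[OF tendsto_arctan_at_top])
  moreover have "isCont (\<lambda>x. sech (c * x)) x" for x
    by (intro continuous_on_interior[of UNIV] continuous_intros) auto
  ultimately have "set_integrable lborel (einterval (- \<infinity>) \<infinity>) (\<lambda>x. sech (c * x))"
      "(LBINT x=- \<infinity>..\<infinity>. sech (c * x)) = pi / c - 0"
    using interval_integral_FTC_nonneg[of "- \<infinity>" \<infinity> ?F "\<lambda>x. sech (c * x)" 0 "pi / c"]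
      has_real_derivative_arctan_exp_scaled[of c] assms
    by (auto simp: ereal_tendsto_simps sech_pos less_imp_le)
  then show ?thesis
    by (simp add: has_bochner_integral_iff interval_lebesgue_integral_def set_lebesgue_integral_def
        set_integrable_def einterval_eq_UNIV)
qed

lemma has_real_derivative_sech_power:
  "((\<lambda>x. sech x ^ n) has_real_derivative - real n * tanh x * sech x ^ n) (at x)"
proof -
  have "((\<lambda>x. sech x ^ n) has_real_derivative real n * sech x ^ (n - 1) * (- tanh x * sech x)) (at x)"
    using DERIV_pow[THEN DERIV_chain2, OF has_real_derivative_sech_scaled[of 1]] by simp
  also have "real n * sech x ^ (n - 1) * (- tanh x * sech x) = - real n * tanh x * sech x ^ n"
    by (cases n) (simp_all add: algebra_simps)
  finally show ?thesis .
qed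


section \<open>Polynomials in \<open>tanh (c x)\<close> and \<open>sech (c x)\<close>\<close>

inductive_set sech_tanh_alg :: "(real \<Rightarrow> complex) set" where
  const: "(\<lambda>x. c) \<in> sech_tanh_alg"
| tanh: "(\<lambda>x. complex_of_real (tanh (c * x))) \<in> sech_tanh_alg"
| sech: "(\<lambda>x. complex_of_real (sech (c * x))) \<in> sech_tanh_alg"
| add: "f \<in> sech_tanh_alg \<Longrightarrow> g \<in> sech_tanh_alg \<Longrightarrow> (\<lambda>x. f x + g x) \<in> sech_tanh_alg"
| mult: "f \<in> sech_tanh_alg \<Longrightarrow> g \<in> sech_tanh_alg \<Longrightarrow> (\<lambda>x. f x * g x) \<in> sech_tanh_alg"

lemma sech_tanh_alg_power: "f \<in> sech_tanh_alg \<Longrightarrow> (\<lambda>x. f x ^ n) \<in> sech_tanh_alg"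
  by (induction n) (auto intro: sech_tanh_alg.intros)

lemma sech_power_mem_sech_tanh_alg:
  "(\<lambda>x. complex_of_real (sech x ^ n)) \<in> sech_tanh_alg"
  "(\<lambda>x. complex_of_real (- real n * tanh x * sech x ^ n)) \<in> sech_tanh_alg"
proof -
  have "(\<lambda>x. complex_of_real (sech (1 * x)) ^ n) \<in> sech_tanh_alg"
    "(\<lambda>x. complex_of_real (- real n) * complex_of_real (tanh (1 * x)) * complex_of_real (sech (1 * x)) ^ n)
      \<in> sech_tanh_alg"
    by (intro sech_tanh_alg.intros sech_tanh_alg_power)+
  then show "(\<lambda>x. complex_of_real (sech x ^ n)) \<in> sech_tanh_alg"
    "(\<lambda>x. complex_of_real (- real n * tanh x * sech x ^ n)) \<in> sech_tanh_alg"
    by simp_all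
qed


lemma sech_tanh_alg_has_vector_derivative:
  "f \<in> sech_tanh_alg \<Longrightarrow> \<exists>f'\<in>sech_tanh_alg. \<forall>x. (f has_vector_derivative f' x) (at x)"
proof (induction rule: sech_tanh_alg.induct)
  case (const c)
  show ?case
    by (auto intro!: bexI[of _ "\<lambda>x. 0"] sech_tanh_alg.const)
next
  case (tanh c)
  let ?f' = "\<lambda>x. complex_of_real c * (complex_of_real (sech (c * x)) * complex_of_real (sech (c * x)))"
  have "?f' \<in> sech_tanh_alg"
    by (intro sech_tanh_alg.intros)
  moreover have "((\<lambda>x. complex_of_real (tanh (c * x))) has_vector_derivative ?f' x) (at x)" for x
    by (rule has_vector_derivative_of_real[OF has_real_derivative_tanh_scaled, THEN has_vector_derivative_eq_rhs])
      (simp add: power2_eq_square)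
  ultimately show ?case
    by (intro bexI[of _ ?f']) auto
next
  case (sech c)
  let ?f' = "\<lambda>x. complex_of_real (- c) * (complex_of_real (tanh (c * x)) * complex_of_real (sech (c * x)))"
  have "?f' \<in> sech_tanh_alg"
    by (intro sech_tanh_alg.intros)
  moreover have "((\<lambda>x. complex_of_real (sech (c * x))) has_vector_derivative ?f' x) (at x)" for x
    by (rule has_vector_derivative_of_real[OF has_real_derivative_sech_scaled, THEN has_vector_derivative_eq_rhs])
      simp
  ultimately show ?case
    by (intro bexI[of _ ?f']) auto
next
  case (add f g)
  then obtain f' g' where "f' \<in> sech_tanh_alg" "g' \<in> sech_tanh_alg"
    "\<And>x. (f has_vector_derivative f' x) (at x)" "\<And>x. (g has_vector_derivative g' x) (at x)"
    by blast
  then show ?case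
    by (intro bexI[of _ "\<lambda>x. f' x + g' x"]) (auto intro!: sech_tanh_alg.add has_vector_derivative_add)
next
  case (mult f g)
  then obtain f' g' where "f' \<in> sech_tanh_alg" "g' \<in> sech_tanh_alg"
    "\<And>x. (f has_vector_derivative f' x) (at x)" "\<And>x. (g has_vector_derivative g' x) (at x)"
    by blast
  then show ?case
    by (intro bexI[of _ "\<lambda>x. f x * g' x + f' x * g x"])
      (auto intro!: sech_tanh_alg.intros has_vector_derivative_mult mult.hyps)
qed

lemma sech_tanh_alg_bounded: "f \<in> sech_tanh_alg \<Longrightarrow> \<exists>M. \<forall>x. cmod (f x) \<le> M"
proof (induction rule: sech_tanh_alg.induct)
  case (tanh c)
  show ?case
    using abs_tanh_le_1 by auto
next
  case (sech c)
  show ?case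
    using sech_le_1 sech_pos by (auto intro!: exI[of _ 1] simp: abs_of_pos)
next
  case (add f g)
  then obtain A B where "\<forall>x. cmod (f x) \<le> A" "\<forall>x. cmod (g x) \<le> B"
    by blast
  then show ?case
    by (intro exI[of _ "A + B"]) (metis add_mono norm_triangle_le)
next
  case (mult f g)
  then obtain A B where "\<forall>x. cmod (f x) \<le> A" "\<forall>x. cmod (g x) \<le> B"
    by blast
  then show ?case
    by (intro exI[of _ "A * B"]) (auto simp: norm_mult intro!: mult_mono order_trans[OF norm_ge_zero])
qed auto

lemma sech_tanh_alg_continuous_on: "f \<in> sech_tanh_alg \<Longrightarrow> continuous_on S f"
  using sech_tanh_alg_has_vector_derivative
  by (meson continuous_at_imp_continuous_on has_vector_derivative_continuous)

lemma sech_tanh_alg_mult_derivatives: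
  assumes "\<And>x. (B has_vector_derivative m x * B x) (at x)" "m \<in> sech_tanh_alg" "h \<in> sech_tanh_alg"
  obtains D where "D 0 = (\<lambda>x. h x * B x)" "\<And>k x. (D k has_vector_derivative D (Suc k) x) (at x)"
    "\<And>k. \<exists>g\<in>sech_tanh_alg. D k = (\<lambda>x. g x * B x)"
proof -
  obtain deriv where deriv: "\<And>g. g \<in> sech_tanh_alg \<Longrightarrow>
      deriv g \<in> sech_tanh_alg \<and> (\<forall>x. (g has_vector_derivative deriv g x) (at x))"
    using sech_tanh_alg_has_vector_derivative by metis
  define G where "G k = ((\<lambda>g x. deriv g x + g x * m x) ^^ k) h" for k
  have G_mem: "G k \<in> sech_tanh_alg" for k
    by (induction k) (auto simp: G_def assms deriv intro!: sech_tanh_alg.intros)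
  have "((\<lambda>x. G k x * B x) has_vector_derivative G (Suc k) x * B x) (at x)" for k x
    using has_vector_derivative_mult[OF conjunct2[OF deriv[OF G_mem], rule_format] assms(1)]
    by (rule has_vector_derivative_eq_rhs) (simp add: G_def algebra_simps)
  then show ?thesis
    using G_mem by (intro that[of "\<lambda>k x. G k x * B x"]) (auto simp: G_def)
qed

lemma schwartz_sech_tanh_alg_mult:
  assumes B: "\<And>x. (B has_vector_derivative m x * B x) (at x)" "m \<in> sech_tanh_alg"
    and h: "h \<in> sech_tanh_alg"
    and B_le: "\<And>x. cmod (B x) \<le> K * sech (c * x)" and c: "0 < c"
  shows "schwartz (\<lambda>x. h x * B x)"
proof -
  obtain D where D: "D 0 = (\<lambda>x. h x * B x)" "\<And>k x. (D k has_vector_derivative D (Suc k) x) (at x)"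
    "\<And>k. \<exists>g\<in>sech_tanh_alg. D k = (\<lambda>x. g x * B x)"
    using sech_tanh_alg_mult_derivatives[OF B h] by blast
  have K: "0 \<le> K"
    using order_trans[OF norm_ge_zero B_le[of 0]] by (simp add: sech_def)
  have "bounded (range (\<lambda>x. complex_of_real (x ^ j) * D k x))" for j k
  proof -
    obtain g where g: "g \<in> sech_tanh_alg" "D k = (\<lambda>x. g x * B x)"
      using D(3) by blast
    obtain M where M: "\<And>x. cmod (g x) \<le> M"
      using sech_tanh_alg_bounded[OF g(1)] by blast
    have M0: "0 \<le> M"
      using M[of 0] norm_ge_zero[of "g 0"] by linarith
    have "cmod (complex_of_real (x ^ j) * D k x) \<le> M * K * (2 * (real j / c) ^ j)" for x
    proof -
      have "cmod (complex_of_real (x ^ j) * D k x) = \<bar>x\<bar> ^ j * (cmod (g x) * cmod (B x))"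
        by (simp add: g norm_mult norm_power)
      also have "\<dots> \<le> \<bar>x\<bar> ^ j * (M * (K * sech (c * x)))"
        by (intro mult_left_mono mult_mono M B_le) (simp_all add: M0)
      also have "\<dots> = M * K * (\<bar>x\<bar> ^ j * sech (c * x))"
        by simp
      also have "\<dots> \<le> M * K * (2 * (real j / c) ^ j)"
        by (intro mult_left_mono abs_power_mult_sech_le c) (simp add: M0 K)
      finally show ?thesis .
    qed
    then show ?thesis
      unfolding bounded_iff by blast
  qed
  then show ?thesis
    unfolding schwartz_def using D(1,2) by blast
qed

section \<open>Fourier transform\<close>

lemma borel_measurable_cis [measurable]: "cis \<in> borel_measurable borel"
  by (intro borel_measurable_continuous_onI continuous_intros)

lemma integrable_cis_mult:
  "integrable lborel f \<Longrightarrow> integrable lborel (\<lambda>x. cis (- (x * \<xi>)) * f x)"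
  by (rule Bochner_Integration.integrable_bound[of _ f]) (auto simp: norm_mult)

lemma norm_fourier_le:
  assumes "integrable lborel f"
  shows "cmod (fourier f \<xi>) \<le> 1 / sqrt (2 * pi) * (LINT x|lborel. cmod (f x))"
proof -
  have "cmod (LINT x|lborel. cis (- (x * \<xi>)) * f x) \<le> (LINT x|lborel. cmod (cis (- (x * \<xi>)) * f x))"
    by (rule integral_norm_bound)
  then have "cmod (LINT x|lborel. cis (- (x * \<xi>)) * f x) / sqrt (2 * pi)
      \<le> (LINT x|lborel. cmod (f x)) / sqrt (2 * pi)"
    by (simp add: norm_mult divide_right_mono)
  then show ?thesis
    unfolding fourier_def by (simp add: norm_mult norm_divide)
qed

lemma fourier_measurable:
  assumes "f \<in> borel_measurable lborel"
  shows "fourier f \<in> borel_measurable lborel"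
proof -
  have "(\<lambda>(\<xi>, x). cis (- (x * \<xi>)) * f x) \<in> borel_measurable (lborel \<Otimes>\<^sub>M lborel)"
    using assms[unfolded measurable_lborel1] by measurable
  then show ?thesis
    unfolding fourier_def [abs_def] by measurable
qed

lemma integrable_fourier_mult:
  assumes f: "integrable lborel f" and g: "integrable lborel g"
  shows "integrable lborel (\<lambda>\<xi>. fourier f \<xi> * complex_of_real (g \<xi>))"
proof -
  let ?C = "1 / sqrt (2 * pi) * (LINT x|lborel. cmod (f x))"
  have meas: "(\<lambda>\<xi>. fourier f \<xi> * complex_of_real (g \<xi>)) \<in> borel_measurable lborel"
    using fourier_measurable[OF borel_measurable_integrable[OF f]] borel_measurable_integrable[OF g]
    unfolding measurable_lborel1 by measurable
  have "norm (fourier f \<xi> * complex_of_real (g \<xi>)) \<le> norm (?C * norm (g \<xi>))" for \<xi>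
    using mult_right_mono[OF norm_fourier_le[OF f, of \<xi>] norm_ge_zero[of "g \<xi>"]]
    by (simp add: norm_mult)
  then show ?thesis
    by (intro Bochner_Integration.integrable_bound[OF integrable_mult_right[OF integrable_norm[OF g]] meas] AE_I2)
qed

lemma fourier_mult_left: "fourier (\<lambda>x. c * f x) \<xi> = c * fourier f \<xi>"
proof -
  have "(LINT x|lborel. cis (- (x * \<xi>)) * (c * f x)) = c * (LINT x|lborel. cis (- (x * \<xi>)) * f x)"
    by (subst integral_mult_right_zero[symmetric]) (simp add: mult_ac)
  then show ?thesis
    unfolding fourier_def by (simp add: mult_ac)
qed

lemma H_half_norm_sq_mult_unit:
  "cmod c = 1 \<Longrightarrow> H_half_norm_sq (\<lambda>x. c * f x) = H_half_norm_sq f"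
  by (simp add: H_half_norm_sq_def fourier_mult_left norm_mult)

lemma has_vector_derivative_exp_i_of_real:
  assumes "(f has_real_derivative f') (at x)"
  shows "((\<lambda>x. exp (\<i> * complex_of_real (f x))) has_vector_derivative
           \<i> * complex_of_real f' * exp (\<i> * complex_of_real (f x))) (at x)"
proof -
  have "((\<lambda>z. exp (\<i> * z)) has_field_derivative \<i> * exp (\<i> * complex_of_real (f x)))
      (at (complex_of_real (f x)))"
    by (auto intro!: derivative_eq_intros)
  from field_vector_diff_chain_at[OF has_vector_derivative_of_real[OF assms] this] show ?thesis
    by (simp add: o_def mult_ac)
qed

definition has_L1_derivative :: "(real \<Rightarrow> complex) \<Rightarrow> (real \<Rightarrow> complex) \<Rightarrow> bool" where
  "has_L1_derivative f f' \<longleftrightarrow>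
     (\<forall>x. (f has_vector_derivative f' x) (at x)) \<and> continuous_on UNIV f' \<and>
     integrable lborel f \<and> integrable lborel f' \<and> (f \<longlongrightarrow> 0) at_top \<and> (f \<longlongrightarrow> 0) at_bot"

lemma fourier_of_derivative:
  assumes "has_L1_derivative f f'"
  shows "fourier f' \<xi> = \<i> * complex_of_real \<xi> * fourier f \<xi>"
proof -
  have d: "\<And>x. (f has_vector_derivative f' x) (at x)" and c: "continuous_on UNIV f'"
    and i: "integrable lborel f" "integrable lborel f'" and l: "(f \<longlongrightarrow> 0) at_top" "(f \<longlongrightarrow> 0) at_bot"
    using assms unfolding has_L1_derivative_def by auto
  define G where "G x = cis (- (x * \<xi>)) * f x" for x
  define G' where "G' x = cis (- (x * \<xi>)) * f' x - \<i> * complex_of_real \<xi> * G x" for x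
  have "(G has_vector_derivative G' x) (at x)" for x
    unfolding G_def [abs_def] G'_def cis_conv_exp
    by (rule has_vector_derivative_mult[OF has_vector_derivative_exp_i_of_real d, THEN has_vector_derivative_eq_rhs])
      (auto intro!: derivative_eq_intros simp: algebra_simps G_def cis_conv_exp)
  moreover have "isCont G' x" for x
    using has_vector_derivative_continuous[OF d] c
    unfolding G'_def G_def cis_conv_exp
    by (intro continuous_intros) (auto simp: continuous_on_eq_continuous_at)
  moreover have iG: "integrable lborel (\<lambda>x. cis (- (x * \<xi>)) * f x)"
    "integrable lborel (\<lambda>x. cis (- (x * \<xi>)) * f' x)"
    using i by (auto intro: integrable_cis_mult)
  then have "set_integrable lborel (einterval (- \<infinity>) \<infinity>) G'"
    unfolding set_integrable_def einterval_eq_UNIV G'_def G_def by auto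
  moreover have "(G \<longlongrightarrow> 0) F" if "(f \<longlongrightarrow> 0) F" for F
  proof -
    have "(\<lambda>x. norm (G x)) = (\<lambda>x. norm (f x))"
      by (simp add: G_def norm_mult)
    then show ?thesis
      using that tendsto_norm_zero_iff[of G F] tendsto_norm_zero_iff[of f F] by simp
  qed
  ultimately have "(LBINT x=- \<infinity>..\<infinity>. G' x) = 0 - 0"
    using l by (intro interval_integral_FTC_integrable[of "- \<infinity>" \<infinity> G G']) (auto simp: ereal_tendsto_simps)
  then have "(LINT x|lborel. cis (- (x * \<xi>)) * f' x) = \<i> * complex_of_real \<xi> * (LINT x|lborel. G x)"
    using iG by (simp add: interval_lebesgue_integral_def set_lebesgue_integral_def einterval_eq_UNIV G'_def G_def)
  then show ?thesis
    unfolding fourier_def G_def by (simp add: algebra_simps)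
qed

lemma square_mult_norm_fourier_le:
  assumes "has_L1_derivative f f1" "has_L1_derivative f1 f2"
  shows "\<xi>\<^sup>2 * cmod (fourier f \<xi>) \<le> 1 / sqrt (2 * pi) * (LINT x|lborel. cmod (f2 x))"
proof -
  have "cmod (fourier f2 \<xi>) = \<xi>\<^sup>2 * cmod (fourier f \<xi>)"
    by (simp add: fourier_of_derivative[OF assms(1)] fourier_of_derivative[OF assms(2)] norm_mult power2_eq_square)
  moreover have "cmod (fourier f2 \<xi>) \<le> 1 / sqrt (2 * pi) * (LINT x|lborel. cmod (f2 x))"
    using assms(2) unfolding has_L1_derivative_def by (intro norm_fourier_le) auto
  ultimately show ?thesis
    by simp
qed

lemma weighted_square_le_inverse_1_plus_square:
  fixes \<xi> a C0 C2 :: real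
  assumes "0 \<le> a" "a \<le> C0" "\<xi>\<^sup>2 * a \<le> C2"
  shows "sqrt (4 + \<xi>\<^sup>2) * a\<^sup>2 \<le> 6 * (C0\<^sup>2 + C2\<^sup>2) * inverse (1 + \<xi>\<^sup>2)"
proof -
  have w: "sqrt (4 + \<xi>\<^sup>2) \<le> 2 + \<bar>\<xi>\<bar>"
    by (rule real_le_lsqrt) (auto simp: power2_eq_square algebra_simps)
  have "(1 + \<xi>\<^sup>2) * (sqrt (4 + \<xi>\<^sup>2) * a\<^sup>2) \<le> 6 * (C0\<^sup>2 + C2\<^sup>2)"
  proof (cases "\<bar>\<xi>\<bar> \<le> 1")
    case True
    then have "\<xi>\<^sup>2 \<le> 1"
      by (simp add: abs_le_square_iff[of \<xi> 1, simplified])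
    then have "(1 + \<xi>\<^sup>2) * (sqrt (4 + \<xi>\<^sup>2) * a\<^sup>2) \<le> 2 * (3 * C0\<^sup>2)"
      using w True assms by (intro mult_mono power_mono) auto
    then show ?thesis
      by (smt (verit) zero_le_power2)
  next
    case False
    then have "\<bar>\<xi>\<bar> * 1 \<le> \<bar>\<xi>\<bar> * \<bar>\<xi>\<bar>"
      by (intro mult_left_mono) auto
    then have "\<bar>\<xi>\<bar> \<le> \<xi>\<^sup>2"
      by (simp add: power2_eq_square abs_mult_self)
    then have "1 \<le> \<xi>\<^sup>2" "sqrt (4 + \<xi>\<^sup>2) \<le> 3 * \<xi>\<^sup>2"
      using False w by linarith+
    then have "(1 + \<xi>\<^sup>2) * (sqrt (4 + \<xi>\<^sup>2) * a\<^sup>2) \<le> (2 * \<xi>\<^sup>2) * ((3 * \<xi>\<^sup>2) * a\<^sup>2)"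
      by (intro mult_mono) auto
    also have "\<dots> = 6 * (\<xi>\<^sup>2 * a)\<^sup>2"
      by (simp add: power2_eq_square)
    also have "\<dots> \<le> 6 * C2\<^sup>2"
      using assms by (intro mult_left_mono power_mono) auto
    finally show ?thesis
      by (smt (verit) zero_le_power2)
  qed
  moreover have "0 < 1 + \<xi>\<^sup>2"
    by (simp add: add_pos_nonneg)
  ultimately show ?thesis
    by (simp add: field_simps)
qed

text \<open>Integrability is not automatic: otherwise \<^const>\<open>H_half_norm_sq\<close> would be the junk value \<open>0\<close>.
  Two derivatives in \<open>L\<^sup>1\<close> give \<open>|f\<^sup>^ \<xi>| = O(\<xi>\<^sup>-\<^sup>2)\<close>, which suffices.\<close>
lemma integrable_H_half_density:
  assumes "has_L1_derivative f f1" "has_L1_derivative f1 f2"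
  shows "integrable lborel (\<lambda>\<xi>. sqrt (4 + \<xi>\<^sup>2) * (cmod (fourier f \<xi>))\<^sup>2)"
proof -
  define C0 where "C0 = 1 / sqrt (2 * pi) * (LINT x|lborel. cmod (f x))"
  define C2 where "C2 = 1 / sqrt (2 * pi) * (LINT x|lborel. cmod (f2 x))"
  have f: "integrable lborel f"
    using assms(1) unfolding has_L1_derivative_def by auto
  have "integrable lborel (\<lambda>x::real. inverse (1 + x\<^sup>2))"
    using integrable_inverse_1_plus_square by (simp add: set_integrable_def einterval_eq_UNIV)
  from integrable_mult_right[OF this, of "6 * (C0\<^sup>2 + C2\<^sup>2)"] show ?thesis
  proof (rule Bochner_Integration.integrable_bound)
    show "(\<lambda>\<xi>. sqrt (4 + \<xi>\<^sup>2) * (cmod (fourier f \<xi>))\<^sup>2) \<in> borel_measurable lborel"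
      using fourier_measurable[OF borel_measurable_integrable[OF f]] by measurable
    have "sqrt (4 + \<xi>\<^sup>2) * (cmod (fourier f \<xi>))\<^sup>2 \<le> 6 * (C0\<^sup>2 + C2\<^sup>2) * inverse (1 + \<xi>\<^sup>2)" for \<xi>
      using norm_fourier_le[OF f] square_mult_norm_fourier_le[OF assms]
      by (intro weighted_square_le_inverse_1_plus_square) (auto simp: C0_def C2_def)
    then show "AE \<xi> in lborel. norm (sqrt (4 + \<xi>\<^sup>2) * (cmod (fourier f \<xi>))\<^sup>2)
        \<le> norm (6 * (C0\<^sup>2 + C2\<^sup>2) * inverse (1 + \<xi>\<^sup>2))"
      by (intro AE_I2) (simp add: abs_le_iff)
  qed
qed

section \<open>Testing against a Gaussian\<close>

lemma gaussian_eq_normal_density: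
  assumes "0 < \<sigma>"
  shows "exp (- (x / \<sigma>)\<^sup>2 / 2) = sqrt (2 * pi) * \<sigma> * normal_density 0 \<sigma> x"
  using assms by (simp add: normal_density_def real_sqrt_mult power_divide)

lemma has_bochner_integral_gaussian:
  assumes "0 < a"
  shows "has_bochner_integral lborel (\<lambda>x. exp (- (a * x)\<^sup>2)) (sqrt pi / a)"
proof -
  let ?s = "1 / (sqrt 2 * a)"
  have eq: "exp (- (a * x)\<^sup>2) = sqrt pi / a * normal_density 0 ?s x" for x
    using gaussian_eq_normal_density[of ?s x] assms
    by (simp add: field_simps power_mult_distrib real_sqrt_mult)
  have "has_bochner_integral lborel (normal_density 0 ?s) 1"
    using integrable_normal_density[where \<mu> = 0 and \<sigma> = ?s]
      integral_normal_density[where \<mu> = 0 and \<sigma> = ?s] assms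
    by (simp add: has_bochner_integral_iff)
  from has_bochner_integral_mult_right[OF this, where c = "sqrt pi / a"] show ?thesis
    unfolding eq by simp
qed

lemma integrable_gaussian_half:
  fixes \<sigma> :: real
  assumes "0 < \<sigma>"
  shows "integrable lborel (\<lambda>\<xi>. exp (- (\<sigma> * \<xi>)\<^sup>2 / 2))"
proof -
  have "(\<lambda>\<xi>. exp (- (\<sigma> * \<xi>)\<^sup>2 / 2)) = (\<lambda>\<xi>. exp (- (\<sigma> / sqrt 2 * \<xi>)\<^sup>2))"
    by (simp add: fun_eq_iff power_mult_distrib power_divide)
  then show ?thesis
    using integrable.intros[OF has_bochner_integral_gaussian[of "\<sigma> / sqrt 2"]] assms by simp
qed

lemma integral_std_normal_density_iexp:
  "(LINT u|lborel. std_normal_density u *\<^sub>R iexp (t * u)) = complex_of_real (exp (- t\<^sup>2 / 2))"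
proof -
  have "char std_normal_distribution t = (LINT u|lborel. std_normal_density u *\<^sub>R iexp (t * u))"
    unfolding char_def by (rule integral_density) auto
  then show ?thesis
    by (simp add: char_std_normal_distribution)
qed

lemma integral_cis_mult_gaussian:
  assumes "0 < \<sigma>"
  shows "(LINT \<xi>|lborel. cis (- (x * \<xi>)) * complex_of_real (exp (- (\<sigma> * \<xi>)\<^sup>2 / 2)))
      = complex_of_real (2 * pi * normal_density 0 \<sigma> x)"
proof -
  have "(LINT \<xi>|lborel. cis (- (x * \<xi>)) * complex_of_real (exp (- (\<sigma> * \<xi>)\<^sup>2 / 2)))
      = \<bar>1 / \<sigma>\<bar> *\<^sub>R (LINT u|lborel. cis (- (x * (0 + 1 / \<sigma> * u)))
          * complex_of_real (exp (- (\<sigma> * (0 + 1 / \<sigma> * u))\<^sup>2 / 2)))"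
    using assms by (intro lborel_integral_real_affine) simp
  also have "(\<lambda>u. cis (- (x * (0 + 1 / \<sigma> * u))) * complex_of_real (exp (- (\<sigma> * (0 + 1 / \<sigma> * u))\<^sup>2 / 2)))
      = (\<lambda>u. sqrt (2 * pi) *\<^sub>R (std_normal_density u *\<^sub>R iexp ((- x / \<sigma>) * u)))"
    using assms
    by (auto simp: fun_eq_iff cis_conv_exp std_normal_density_def scaleR_conv_of_real field_simps)
  also have "(LINT u|lborel. sqrt (2 * pi) *\<^sub>R (std_normal_density u *\<^sub>R iexp ((- x / \<sigma>) * u)))
      = sqrt (2 * pi) *\<^sub>R complex_of_real (exp (- (- x / \<sigma>)\<^sup>2 / 2))"
    by (simp only: integral_scaleR_right integral_std_normal_density_iexp)
  also have "\<bar>1 / \<sigma>\<bar> *\<^sub>R (sqrt (2 * pi) *\<^sub>R complex_of_real (exp (- (- x / \<sigma>)\<^sup>2 / 2)))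
      = complex_of_real (1 / \<sigma> * sqrt (2 * pi) * exp (- (x / \<sigma>)\<^sup>2 / 2))"
    using assms by (simp add: scaleR_conv_of_real power_divide)
  also have "1 / \<sigma> * sqrt (2 * pi) * exp (- (x / \<sigma>)\<^sup>2 / 2) = 2 * pi * normal_density 0 \<sigma> x"
    unfolding gaussian_eq_normal_density[OF assms] using assms by (simp add: field_simps)
  finally show ?thesis .
qed

lemma integral_fourier_mult_gaussian:
  assumes "0 < \<sigma>" "integrable lborel f"
  shows "(LINT \<xi>|lborel. fourier f \<xi> * complex_of_real (exp (- (\<sigma> * \<xi>)\<^sup>2 / 2)))
       = sqrt (2 * pi) * (LINT x|lborel. f x * complex_of_real (normal_density 0 \<sigma> x))"
proof -
  define g where "g \<xi> = exp (- (\<sigma> * \<xi>)\<^sup>2 / 2)" for \<xi>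
  define K where "K \<xi> x = cis (- (x * \<xi>)) * f x * complex_of_real (g \<xi>)" for \<xi> x
  have g: "integrable lborel g"
    unfolding g_def by (rule integrable_gaussian_half[OF assms(1)])
  have "integrable (lborel \<Otimes>\<^sub>M lborel) (\<lambda>(\<xi>, x). K \<xi> x)"
  proof (rule lborel_pair.Fubini_integrable)
    show "(\<lambda>(\<xi>, x). K \<xi> x) \<in> borel_measurable (lborel \<Otimes>\<^sub>M lborel)"
      using borel_measurable_integrable[OF assms(2)] unfolding K_def g_def measurable_lborel1 by measurable
    have "(LINT x|lborel. norm (K \<xi> x)) = g \<xi> * (LINT x|lborel. cmod (f x))" for \<xi>
      by (simp add: K_def g_def norm_mult)
    then show "integrable lborel (\<lambda>\<xi>. LINT x|lborel. norm (case (\<xi>, x) of (\<xi>, x) \<Rightarrow> K \<xi> x))"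
      using g by simp
    show "AE \<xi> in lborel. integrable lborel (\<lambda>x. case (\<xi>, x) of (\<xi>, x) \<Rightarrow> K \<xi> x)"
      unfolding K_def by (auto intro!: integrable_mult_left integrable_cis_mult assms(2))
  qed
  from lborel_pair.Fubini_integral[OF this]
  have "(LINT x|lborel. LINT \<xi>|lborel. K \<xi> x) = (LINT \<xi>|lborel. LINT x|lborel. K \<xi> x)" .
  moreover have "(LINT x|lborel. K \<xi> x) = sqrt (2 * pi) * (fourier f \<xi> * complex_of_real (g \<xi>))" for \<xi>
    by (simp add: K_def fourier_def)
  moreover have "(LINT \<xi>|lborel. K \<xi> x) = 2 * pi * (f x * complex_of_real (normal_density 0 \<sigma> x))" for x
  proof -
    have "(LINT \<xi>|lborel. K \<xi> x) = f x * (LINT \<xi>|lborel. cis (- (x * \<xi>)) * complex_of_real (g \<xi>))"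
      unfolding K_def by (subst integral_mult_right_zero[symmetric]) (simp add: mult_ac)
    then show ?thesis
      unfolding g_def integral_cis_mult_gaussian[OF assms(1)] by (simp add: mult_ac)
  qed
  ultimately have "sqrt (2 * pi) * (LINT \<xi>|lborel. fourier f \<xi> * complex_of_real (g \<xi>))
      = complex_of_real (2 * pi) * (LINT x|lborel. f x * complex_of_real (normal_density 0 \<sigma> x))"
    by simp
  also have "complex_of_real (2 * pi) = complex_of_real (sqrt (2 * pi)) * complex_of_real (sqrt (2 * pi))"
    by (simp flip: of_real_mult)
  finally have "sqrt (2 * pi) * (LINT \<xi>|lborel. fourier f \<xi> * complex_of_real (g \<xi>))
      = sqrt (2 * pi) * (sqrt (2 * pi) * (LINT x|lborel. f x * complex_of_real (normal_density 0 \<sigma> x)))"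
    by (simp only: mult.assoc)
  then show ?thesis
    unfolding g_def by (rule mult_left_cancel[THEN iffD1, rotated]) simp
qed

lemma norm_diff_le_of_vector_derivative_bound:
  assumes "\<And>x. (f has_vector_derivative f' x) (at x)" "\<And>x. norm (f' x) \<le> L"
  shows "norm (f x - f y) \<le> L * \<bar>x - y\<bar>"
proof -
  have "norm (f x - f y) \<le> L * norm (x - y)"
  proof (rule differentiable_bound[of UNIV f "\<lambda>x h. h *\<^sub>R f' x"])
    show "(f has_derivative (\<lambda>h. h *\<^sub>R f' x)) (at x within UNIV)" for x
      using assms(1)[of x] by (simp add: has_vector_derivative_def)
    show "onorm (\<lambda>h. h *\<^sub>R f' x) \<le> L" for x
    proof (rule onorm_le)
      show "norm (h *\<^sub>R f' x) \<le> L * norm h" for h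
        using mult_left_mono[OF assms(2)[of x] abs_ge_zero[of h]] by (simp add: mult.commute)
    qed
  qed auto
  then show ?thesis
    by simp
qed

lemma norm_integral_diff_mult_normal_density_le:
  assumes "0 < \<sigma>" "\<And>x. (f has_vector_derivative f' x) (at x)" "\<And>x. cmod (f' x) \<le> L"
  shows "integrable lborel (\<lambda>x. (f x - f 0) * complex_of_real (normal_density 0 \<sigma> x))"
    and "cmod (LINT x|lborel. (f x - f 0) * complex_of_real (normal_density 0 \<sigma> x)) \<le> L * \<sigma>"
proof -
  let ?N = "normal_density 0 \<sigma>"
  let ?E = "\<lambda>x. (f x - f 0) * complex_of_real (?N x)"
  have L: "0 \<le> L"
    using assms(3)[of 0] norm_ge_zero[of "f' 0"] by linarith
  have moment: "has_bochner_integral lborel (\<lambda>x. ?N x * \<bar>x\<bar>) (\<sigma> * sqrt (2 / pi))"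
    using integrable_normal_moment_abs[where \<mu> = 0 and \<sigma> = \<sigma> and k = 1]
      integral_normal_moment_abs_odd[where \<mu> = 0 and \<sigma> = \<sigma> and k = 0] assms(1)
    by (simp add: has_bochner_integral_iff)
  have M: "integrable lborel (\<lambda>x. L * (?N x * \<bar>x\<bar>))"
    using integrable.intros[OF moment] by (rule integrable_mult_right)
  have E_le: "norm (?E x) \<le> L * (?N x * \<bar>x\<bar>)" for x
    using mult_right_mono[OF norm_diff_le_of_vector_derivative_bound[OF assms(2,3), of x 0]
        normal_density_nonneg]
    by (simp add: norm_mult mult_ac)
  have "continuous_on UNIV f"
    using assms(2) by (meson continuous_at_imp_continuous_on has_vector_derivative_continuous)
  then have "f \<in> borel_measurable borel"
    by (rule borel_measurable_continuous_onI)
  then have "?E \<in> borel_measurable lborel"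
    by measurable
  then show E: "integrable lborel ?E"
    using E_le by (intro Bochner_Integration.integrable_bound[OF M] AE_I2) (auto intro: order_trans abs_ge_self)
  have "cmod (LINT x|lborel. ?E x) \<le> (LINT x|lborel. L * (?N x * \<bar>x\<bar>))"
    by (rule Bochner_Integration.integral_norm_bound_integral[OF E M E_le])
  also have "\<dots> \<le> L * \<sigma>"
    using has_bochner_integral_integral_eq[OF moment] assms(1) L pi_gt3
    by (simp add: mult_left_mono real_sqrt_le_1_iff)
  finally show "cmod (LINT x|lborel. ?E x) \<le> L * \<sigma>" .
qed

lemma norm_integral_mult_normal_density_ge:
  assumes "0 < \<sigma>" "\<And>x. (f has_vector_derivative f' x) (at x)" "\<And>x. cmod (f' x) \<le> L"
  shows "cmod (f 0) - L * \<sigma> \<le> cmod (LINT x|lborel. f x * complex_of_real (normal_density 0 \<sigma> x))"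
proof -
  let ?N = "normal_density 0 \<sigma>"
  let ?E = "\<lambda>x. (f x - f 0) * complex_of_real (?N x)"
  have E: "integrable lborel ?E" "cmod (LINT x|lborel. ?E x) \<le> L * \<sigma>"
    using norm_integral_diff_mult_normal_density_le[OF assms] by blast+
  have N: "integrable lborel (\<lambda>x. f 0 * complex_of_real (?N x))"
    by (intro integrable_mult_right integrable_of_real) (use assms(1) in auto)
  have "(\<lambda>x. f x * complex_of_real (?N x)) = (\<lambda>x. ?E x + f 0 * complex_of_real (?N x))"
    by (auto simp: algebra_simps)
  then have "(LINT x|lborel. f x * complex_of_real (?N x)) = (LINT x|lborel. ?E x) + f 0"
    using E(1) N assms(1) by simp
  then show ?thesis
    using E(2) norm_triangle_ineq4[of "(LINT x|lborel. ?E x) + f 0" "LINT x|lborel. ?E x"] by simp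
qed

lemma amgm_weighted:
  fixes P G w t :: real
  assumes "0 < w" "0 < t"
  shows "P * G \<le> t / 2 * (w * P\<^sup>2) + 1 / (2 * t) * (G\<^sup>2 / w)"
proof -
  have "2 * (t * w) * (P * G) \<le> (t * w) * (t * w * P\<^sup>2) + G\<^sup>2"
    using zero_le_power2[of "t * w * P - G"] by (simp add: power2_eq_square algebra_simps)
  then have "P * G \<le> ((t * w) * (t * w * P\<^sup>2) + G\<^sup>2) / (2 * (t * w))"
    using assms by (simp add: field_simps)
  also have "\<dots> = t / 2 * (w * P\<^sup>2) + 1 / (2 * t) * (G\<^sup>2 / w)"
    using assms by (simp add: field_simps power2_eq_square)
  finally show ?thesis .
qed

lemma square_le_mult_of_amgm_bounds:
  fixes a h w :: real
  assumes "0 \<le> a" "0 \<le> h" "0 \<le> w" and amgm: "\<And>t. 0 < t \<Longrightarrow> a \<le> t / 2 * h + w / (2 * t)"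
  shows "a\<^sup>2 \<le> h * w"
proof (cases "a = 0")
  case True
  then show ?thesis
    using assms by simp
next
  case False
  then have a: "0 < a"
    using assms by simp
  show ?thesis
  proof (cases "w = 0")
    case True
    have "a \<le> a / (h + 1) / 2 * h"
      using amgm[of "a / (h + 1)"] a assms True by simp
    moreover have "0 \<le> a * h"
      using a assms by simp
    then have "a / (h + 1) / 2 * h < a"
      using a assms by (simp add: field_simps add_nonneg_pos)
    ultimately show ?thesis
      by linarith
  next
    case False
    then have "a \<le> w / a / 2 * h + a / 2"
      using amgm[of "w / a"] a assms by (simp add: field_simps)
    then show ?thesis
      using a by (simp add: field_simps power2_eq_square)
  qed
qed

lemma H_half_norm_sq_nonneg: "0 \<le> H_half_norm_sq f"
  unfolding H_half_norm_sq_def by (intro integral_nonneg_AE) auto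

lemma norm_integral_fourier_mult_square_le:
  assumes H: "integrable lborel (\<lambda>\<xi>. sqrt (4 + \<xi>\<^sup>2) * (cmod (fourier f \<xi>))\<^sup>2)"
    and W: "integrable lborel (\<lambda>\<xi>. (g \<xi>)\<^sup>2 / sqrt (4 + \<xi>\<^sup>2))"
    and I: "integrable lborel (\<lambda>\<xi>. fourier f \<xi> * complex_of_real (g \<xi>))"
  shows "(cmod (LINT \<xi>|lborel. fourier f \<xi> * complex_of_real (g \<xi>)))\<^sup>2
      \<le> H_half_norm_sq f * (LINT \<xi>|lborel. (g \<xi>)\<^sup>2 / sqrt (4 + \<xi>\<^sup>2))"
proof (rule square_le_mult_of_amgm_bounds)
  show "0 \<le> (LINT \<xi>|lborel. (g \<xi>)\<^sup>2 / sqrt (4 + \<xi>\<^sup>2))"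
    by (intro integral_nonneg_AE) auto
  fix t :: real
  assume t: "0 < t"
  have "norm (fourier f \<xi> * complex_of_real (g \<xi>))
      \<le> t / 2 * (sqrt (4 + \<xi>\<^sup>2) * (cmod (fourier f \<xi>))\<^sup>2) + 1 / (2 * t) * ((g \<xi>)\<^sup>2 / sqrt (4 + \<xi>\<^sup>2))"
    for \<xi>
    using amgm_weighted[of "sqrt (4 + \<xi>\<^sup>2)" t "cmod (fourier f \<xi>)" "\<bar>g \<xi>\<bar>"] t
    by (simp add: norm_mult add_pos_nonneg)
  then have "cmod (LINT \<xi>|lborel. fourier f \<xi> * complex_of_real (g \<xi>))
      \<le> (LINT \<xi>|lborel. t / 2 * (sqrt (4 + \<xi>\<^sup>2) * (cmod (fourier f \<xi>))\<^sup>2)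
            + 1 / (2 * t) * ((g \<xi>)\<^sup>2 / sqrt (4 + \<xi>\<^sup>2)))"
    by (intro Bochner_Integration.integral_norm_bound_integral I Bochner_Integration.integrable_add integrable_mult_right H W)
  also have "\<dots> = t / 2 * H_half_norm_sq f + 1 / (2 * t) * (LINT \<xi>|lborel. (g \<xi>)\<^sup>2 / sqrt (4 + \<xi>\<^sup>2))"
    unfolding H_half_norm_sq_def
    by (simp only: Bochner_Integration.integral_add[OF integrable_mult_right[OF H] integrable_mult_right[OF W]]
        integral_mult_right_zero)
  finally show "cmod (LINT \<xi>|lborel. fourier f \<xi> * complex_of_real (g \<xi>))
      \<le> t / 2 * H_half_norm_sq f + (LINT \<xi>|lborel. (g \<xi>)\<^sup>2 / sqrt (4 + \<xi>\<^sup>2)) / (2 * t)"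
    by simp
qed (simp_all add: H_half_norm_sq_nonneg)

lemma integrable_gaussian_div_sqrt_4_plus_square:
  assumes "0 < \<sigma>"
  shows "integrable lborel (\<lambda>\<xi>. exp (- (\<sigma> * \<xi>)\<^sup>2) / sqrt (4 + \<xi>\<^sup>2))"
proof (rule Bochner_Integration.integrable_bound[OF integrable.intros[OF has_bochner_integral_gaussian[OF assms]]])
  show "(\<lambda>\<xi>. exp (- (\<sigma> * \<xi>)\<^sup>2) / sqrt (4 + \<xi>\<^sup>2)) \<in> borel_measurable lborel"
    by measurable
  have "1 \<le> sqrt (4 + \<xi>\<^sup>2)" for \<xi> :: real
    by (simp add: real_le_rsqrt)
  then show "AE \<xi> in lborel. norm (exp (- (\<sigma> * \<xi>)\<^sup>2) / sqrt (4 + \<xi>\<^sup>2)) \<le> norm (exp (- (\<sigma> * \<xi>)\<^sup>2))"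
    by (intro AE_I2) (simp add: divide_le_eq)
qed

lemma has_real_derivative_arsinh_half: "((\<lambda>x. arsinh (x / 2)) has_real_derivative 1 / sqrt (4 + x\<^sup>2)) (at x)"
proof -
  have "sqrt (4 + x\<^sup>2) = sqrt (2\<^sup>2 * ((x / 2)\<^sup>2 + 1))"
    by (simp add: power_divide field_simps)
  also have "\<dots> = 2 * sqrt ((x / 2)\<^sup>2 + 1)"
    by (simp only: real_sqrt_mult real_sqrt_abs abs_numeral)
  finally have "sqrt (4 + x\<^sup>2) = 2 * sqrt ((x / 2)\<^sup>2 + 1)" .
  moreover have "((\<lambda>x. arsinh (x / 2)) has_real_derivative 1 / sqrt ((x / 2)\<^sup>2 + 1) * (1 / 2)) (at x)"
    by (rule DERIV_chain2[OF arsinh_real_has_field_derivative]) (auto intro!: derivative_eq_intros)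
  ultimately show ?thesis
    by (simp add: mult.commute)
qed

lemma integral_gaussian_div_sqrt_4_plus_square_le:
  assumes "0 < \<sigma>"
  shows "(LINT \<xi>|lborel. exp (- (\<sigma> * \<xi>)\<^sup>2) / sqrt (4 + \<xi>\<^sup>2)) \<le> 2 * arsinh (1 / (2 * \<sigma>)) + sqrt pi"
proof -
  define K where "K = 1 / \<sigma>"
  have K: "0 < K"
    using assms by (simp add: K_def)
  have "isCont (\<lambda>\<xi>. 1 / sqrt (4 + \<xi>\<^sup>2)) x" for x
    by (intro continuous_intros) (use add_pos_nonneg[OF _ zero_le_power2, of 4 x] in auto)
  then have core: "has_bochner_integral lborel (\<lambda>\<xi>. 1 / sqrt (4 + \<xi>\<^sup>2) * indicator {- K..K} \<xi>) (2 * arsinh (K / 2))"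
    using has_bochner_integral_FTC_Icc_real[of "- K" K "\<lambda>\<xi>. arsinh (\<xi> / 2)" "\<lambda>\<xi>. 1 / sqrt (4 + \<xi>\<^sup>2)"]
      has_real_derivative_arsinh_half K
    by (auto intro!: continuous_intros simp: add_pos_nonneg)
  have tail: "has_bochner_integral lborel (\<lambda>\<xi>. \<sigma> * exp (- (\<sigma> * \<xi>)\<^sup>2)) (sqrt pi)"
    using has_bochner_integral_mult_right[OF has_bochner_integral_gaussian[OF assms], where c = \<sigma>] assms
    by simp
  have "exp (- (\<sigma> * \<xi>)\<^sup>2) / sqrt (4 + \<xi>\<^sup>2)
      \<le> 1 / sqrt (4 + \<xi>\<^sup>2) * indicator {- K..K} \<xi> + \<sigma> * exp (- (\<sigma> * \<xi>)\<^sup>2)" for \<xi>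
  proof (cases "\<bar>\<xi>\<bar> \<le> K")
    case True
    then show ?thesis
      using assms by (simp add: indicator_def abs_le_iff divide_right_mono add_increasing2)
  next
    case False
    have "sqrt (\<xi>\<^sup>2) \<le> sqrt (4 + \<xi>\<^sup>2)"
      by (intro real_sqrt_le_mono) simp
    then have "1 / sqrt (4 + \<xi>\<^sup>2) \<le> 1 / K"
      using False K add_pos_nonneg[OF _ zero_le_power2, of 4 \<xi>] by (intro divide_left_mono mult_pos_pos) auto
    then have "exp (- (\<sigma> * \<xi>)\<^sup>2) * (1 / sqrt (4 + \<xi>\<^sup>2)) \<le> exp (- (\<sigma> * \<xi>)\<^sup>2) * \<sigma>"
      unfolding K_def by (intro mult_left_mono) auto
    moreover have "indicator {- K..K} \<xi> = (0::real)"
      using False by (auto simp: indicator_def abs_le_iff)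
    ultimately show ?thesis
      by (simp add: mult.commute)
  qed
  then have "(LINT \<xi>|lborel. exp (- (\<sigma> * \<xi>)\<^sup>2) / sqrt (4 + \<xi>\<^sup>2)) \<le> 2 * arsinh (K / 2) + sqrt pi"
    using integral_mono[OF integrable_gaussian_div_sqrt_4_plus_square[OF assms]
        integrable.intros[OF has_bochner_integral_add[OF core tail]]]
      has_bochner_integral_integral_eq[OF has_bochner_integral_add[OF core tail]]
    by simp
  then show ?thesis
    by (simp add: K_def mult.commute)
qed

lemma H_half_norm_sq_lower_bound:
  assumes "0 < \<sigma>" and f': "\<And>x. (f has_vector_derivative f' x) (at x)" "\<And>x. cmod (f' x) \<le> L"
    and f: "integrable lborel f"
    and H: "integrable lborel (\<lambda>\<xi>. sqrt (4 + \<xi>\<^sup>2) * (cmod (fourier f \<xi>))\<^sup>2)"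
    and "L * \<sigma> \<le> cmod (f 0)"
  shows "2 * pi * (cmod (f 0) - L * \<sigma>)\<^sup>2
      \<le> H_half_norm_sq f * (LINT \<xi>|lborel. exp (- (\<sigma> * \<xi>)\<^sup>2) / sqrt (4 + \<xi>\<^sup>2))"
proof -
  define g where "g \<xi> = exp (- (\<sigma> * \<xi>)\<^sup>2 / 2)" for \<xi>
  define I where "I = (LINT \<xi>|lborel. fourier f \<xi> * complex_of_real (g \<xi>))"
  have g_square: "(g \<xi>)\<^sup>2 = exp (- (\<sigma> * \<xi>)\<^sup>2)" for \<xi>
    by (simp add: g_def power2_eq_square flip: exp_add)
  have "integrable lborel g"
    unfolding g_def by (rule integrable_gaussian_half[OF assms(1)])
  then have "integrable lborel (\<lambda>\<xi>. fourier f \<xi> * complex_of_real (g \<xi>))"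
    by (rule integrable_fourier_mult[OF f])
  then have "(cmod I)\<^sup>2 \<le> H_half_norm_sq f * (LINT \<xi>|lborel. exp (- (\<sigma> * \<xi>)\<^sup>2) / sqrt (4 + \<xi>\<^sup>2))"
    using norm_integral_fourier_mult_square_le[OF H, of g] integrable_gaussian_div_sqrt_4_plus_square[OF assms(1)]
    by (simp add: I_def g_square)
  moreover have "I = sqrt (2 * pi) * (LINT x|lborel. f x * complex_of_real (normal_density 0 \<sigma> x))"
    unfolding I_def g_def by (rule integral_fourier_mult_gaussian[OF assms(1) f])
  then have "sqrt (2 * pi) * (cmod (f 0) - L * \<sigma>) \<le> cmod I"
    using norm_integral_mult_normal_density_ge[OF assms(1) f'] by (simp add: norm_mult)
  then have "2 * pi * (cmod (f 0) - L * \<sigma>)\<^sup>2 \<le> (cmod I)\<^sup>2"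
    using power_mono[of _ _ 2] assms(6) by (fastforce simp: power_mult_distrib)
  ultimately show ?thesis
    by linarith
qed

section \<open>Solitons of the derivative NLS\<close>

definition soliton_amplitude :: "real \<Rightarrow> real \<Rightarrow> real" where
  "soliton_amplitude b x = sqrt (2 * b) * sqrt (sech (b * x))"

definition soliton_phase :: "real \<Rightarrow> real \<Rightarrow> real" where
  "soliton_phase b x = -3 * arctan (exp (b * x))"

definition dnls_soliton :: "real \<Rightarrow> real \<Rightarrow> real \<Rightarrow> complex" where
  "dnls_soliton b t x =
     complex_of_real (soliton_amplitude b x) * exp (\<i> * complex_of_real (b\<^sup>2 / 4 * t + soliton_phase b x))"

definition soliton_log_deriv :: "real \<Rightarrow> real \<Rightarrow> complex" where
  "soliton_log_deriv b x =
     complex_of_real (- (b / 2) * tanh (b * x)) - \<i> * complex_of_real (3 * b / 2 * sech (b * x))"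

definition soliton_log_deriv' :: "real \<Rightarrow> real \<Rightarrow> complex" where
  "soliton_log_deriv' b x =
     complex_of_real (- (b / 2) * (b * sech (b * x) ^ 2))
     - \<i> * complex_of_real (3 * b / 2 * (- b * tanh (b * x) * sech (b * x)))"

lemma has_real_derivative_soliton_amplitude:
  "(soliton_amplitude b has_real_derivative - (b / 2) * tanh (b * x) * soliton_amplitude b x) (at x)"
proof -
  have s: "0 < sech (b * x)"
    by (rule sech_pos)
  have "((\<lambda>x. sqrt (sech (b * x))) has_real_derivative
      inverse (sqrt (sech (b * x))) / 2 * (- b * tanh (b * x) * sech (b * x))) (at x)"
    using s by (intro DERIV_chain2[OF DERIV_real_sqrt has_real_derivative_sech_scaled]) auto
  also have "inverse (sqrt (sech (b * x))) / 2 * (- b * tanh (b * x) * sech (b * x))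
      = - (b / 2) * tanh (b * x) * sqrt (sech (b * x))"
    using s real_sqrt_mult_self[of "sech (b * x)"] by (simp add: field_simps)
  finally have "((\<lambda>x. sqrt (sech (b * x))) has_real_derivative \<dots>) (at x)" .
  from DERIV_cmult[OF this, of "sqrt (2 * b)"] show ?thesis
    unfolding soliton_amplitude_def [abs_def] by (simp add: algebra_simps)
qed

lemma has_real_derivative_soliton_phase:
  "(soliton_phase b has_real_derivative - (3 * b / 2) * sech (b * x)) (at x)"
proof (cases "b = 0")
  case True
  then show ?thesis
    by (simp add: soliton_phase_def [abs_def])
next
  case False
  have "((\<lambda>x. - (3 * b / 2) * (2 / b * arctan (exp (b * x)))) has_real_derivative
      - (3 * b / 2) * sech (b * x)) (at x)"
    by (rule DERIV_cmult[OF has_real_derivative_arctan_exp_scaled[OF False]])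
  moreover have "(\<lambda>x. - (3 * b / 2) * (2 / b * arctan (exp (b * x)))) = soliton_phase b"
    using False by (auto simp: soliton_phase_def fun_eq_iff)
  ultimately show ?thesis
    by simp
qed

lemma dnls_soliton_has_vector_derivative_x:
  "((\<lambda>y. dnls_soliton b t y) has_vector_derivative soliton_log_deriv b x * dnls_soliton b t x) (at x)"
proof -
  let ?E = "\<lambda>y. exp (\<i> * complex_of_real (b\<^sup>2 / 4 * t + soliton_phase b y))"
  have "((\<lambda>y. complex_of_real (soliton_amplitude b y) * ?E y) has_vector_derivative
      complex_of_real (soliton_amplitude b x) * (\<i> * complex_of_real (- (3 * b / 2) * sech (b * x)) * ?E x)
      + complex_of_real (- (b / 2) * tanh (b * x) * soliton_amplitude b x) * ?E x) (at x)"
    by (intro has_vector_derivative_mult has_vector_derivative_of_real has_real_derivative_soliton_amplitude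
        has_vector_derivative_exp_i_of_real)
      (auto intro!: derivative_eq_intros has_real_derivative_soliton_phase[THEN DERIV_cong])
  then show ?thesis
    unfolding dnls_soliton_def [abs_def] soliton_log_deriv_def by (simp add: algebra_simps)
qed

lemma dnls_soliton_has_vector_derivative_t:
  "((\<lambda>s. dnls_soliton b s x) has_vector_derivative \<i> * complex_of_real (b\<^sup>2 / 4) * dnls_soliton b t x) (at t)"
  unfolding dnls_soliton_def
  by (rule has_vector_derivative_mult_right[OF has_vector_derivative_exp_i_of_real, THEN has_vector_derivative_eq_rhs])
    (auto intro!: derivative_eq_intros simp: algebra_simps)

lemma soliton_log_deriv_has_vector_derivative:
  "(soliton_log_deriv b has_vector_derivative soliton_log_deriv' b x) (at x)"
  unfolding soliton_log_deriv_def [abs_def] soliton_log_deriv'_def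
  by (intro has_vector_derivative_diff has_vector_derivative_mult_right has_vector_derivative_of_real
      DERIV_cmult has_real_derivative_tanh_scaled[THEN DERIV_cong] has_real_derivative_sech_scaled[THEN DERIV_cong])
    auto

lemma dnls_soliton_has_vector_derivative_xx:
  "((\<lambda>y. soliton_log_deriv b y * dnls_soliton b t y) has_vector_derivative
     (soliton_log_deriv' b x + soliton_log_deriv b x ^ 2) * dnls_soliton b t x) (at x)"
  by (rule has_vector_derivative_mult[OF soliton_log_deriv_has_vector_derivative
        dnls_soliton_has_vector_derivative_x, THEN has_vector_derivative_eq_rhs])
    (simp add: algebra_simps power2_eq_square)

lemma norm_dnls_soliton: "0 \<le> b \<Longrightarrow> cmod (dnls_soliton b t x) = soliton_amplitude b x"
  by (simp add: dnls_soliton_def norm_mult soliton_amplitude_def sech_pos less_imp_le)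

lemma norm_dnls_soliton_square: "0 \<le> b \<Longrightarrow> cmod (dnls_soliton b t x) ^ 2 = 2 * b * sech (b * x)"
  by (simp add: norm_dnls_soliton soliton_amplitude_def power_mult_distrib sech_pos less_imp_le)

lemma norm_dnls_soliton_le: "0 \<le> b \<Longrightarrow> cmod (dnls_soliton b t x) \<le> sqrt (2 * b) * sech (b / 2 * x)"
  using sqrt_sech_le_sech_half[of "b * x"]
  by (simp add: norm_dnls_soliton soliton_amplitude_def mult_left_mono)

lemma dnls_soliton_cubic_has_vector_derivative:
  assumes "0 \<le> b"
  shows "((\<lambda>y. complex_of_real ((cmod (dnls_soliton b t y))\<^sup>2) * dnls_soliton b t y) has_vector_derivative
     (complex_of_real (2 * b * (- b * tanh (b * x) * sech (b * x)))
      + complex_of_real (2 * b * sech (b * x)) * soliton_log_deriv b x) * dnls_soliton b t x) (at x)"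
  unfolding norm_dnls_soliton_square[OF assms]
  by (rule has_vector_derivative_mult[OF has_vector_derivative_of_real[OF DERIV_cmult[OF has_real_derivative_sech_scaled]]
        dnls_soliton_has_vector_derivative_x, THEN has_vector_derivative_eq_rhs])
    (simp add: algebra_simps)

text \<open>With \<open>T = tanh (b x)\<close> and \<open>S = sech (b x)\<close>, the equation divided by the soliton
  reduces to \<open>b\<^sup>2 / 4 * (T\<^sup>2 + S\<^sup>2 - 1) = 0\<close>.\<close>
lemma soliton_log_deriv_dnls_identity:
  "\<i> * (\<i> * complex_of_real (b\<^sup>2 / 4)) + (soliton_log_deriv' b x + soliton_log_deriv b x ^ 2)
   + \<i> * (complex_of_real (2 * b * (- b * tanh (b * x) * sech (b * x)))
           + complex_of_real (2 * b * sech (b * x)) * soliton_log_deriv b x) = 0"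
proof -
  define T where "T = tanh (b * x)"
  define S where "S = sech (b * x)"
  have "T\<^sup>2 + S\<^sup>2 = 1"
    unfolding T_def S_def by (rule tanh_square_plus_sech_square)
  moreover have "\<i> * (\<i> * complex_of_real (b\<^sup>2 / 4)) + (soliton_log_deriv' b x + soliton_log_deriv b x ^ 2)
   + \<i> * (complex_of_real (2 * b * (- b * tanh (b * x) * sech (b * x)))
           + complex_of_real (2 * b * sech (b * x)) * soliton_log_deriv b x)
   = complex_of_real (b\<^sup>2 / 4 * (T\<^sup>2 + S\<^sup>2 - 1))"
    unfolding soliton_log_deriv_def soliton_log_deriv'_def T_def[symmetric] S_def[symmetric]
    by (simp add: complex_eq_iff power2_eq_square algebra_simps)
  ultimately show ?thesis
    by simp
qed

lemma norm_soliton_log_deriv_le: "0 \<le> b \<Longrightarrow> cmod (soliton_log_deriv b x) \<le> 2 * b"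
proof -
  assume b: "0 \<le> b"
  have "cmod (soliton_log_deriv b x)
      \<le> cmod (complex_of_real (- (b / 2) * tanh (b * x))) + cmod (\<i> * complex_of_real (3 * b / 2 * sech (b * x)))"
    unfolding soliton_log_deriv_def by (rule norm_triangle_ineq4)
  also have "\<dots> = b / 2 * \<bar>tanh (b * x)\<bar> + 3 * b / 2 * sech (b * x)"
    using b by (simp add: norm_mult abs_mult sech_pos less_imp_le)
  also have "\<dots> \<le> b / 2 * 1 + 3 * b / 2 * 1"
    using b by (intro add_mono mult_left_mono abs_tanh_le_1 sech_le_1) auto
  finally show ?thesis
    by simp
qed


lemma soliton_log_deriv_mem: "soliton_log_deriv b \<in> sech_tanh_alg"
proof -
  have "(\<lambda>x. complex_of_real (- (b / 2)) * complex_of_real (tanh (b * x))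
      + (- \<i> * complex_of_real (3 * b / 2)) * complex_of_real (sech (b * x))) \<in> sech_tanh_alg"
    by (intro sech_tanh_alg.intros)
  then show ?thesis
    by (simp add: soliton_log_deriv_def [abs_def] algebra_simps)
qed

lemma dnls_soliton_schwartz:
  assumes "0 < b"
  shows "schwartz (dnls_soliton b t)"
proof -
  have "schwartz (\<lambda>x. 1 * dnls_soliton b t x)"
    using assms
    by (intro schwartz_sech_tanh_alg_mult[OF dnls_soliton_has_vector_derivative_x soliton_log_deriv_mem
          sech_tanh_alg.const norm_dnls_soliton_le]) auto
  then show ?thesis
    by simp
qed

lemma continuous_on_dnls_soliton: "continuous_on UNIV (\<lambda>p. dnls_soliton b (fst p) (snd p))"
  unfolding dnls_soliton_def soliton_amplitude_def soliton_phase_def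
  by (intro continuous_intros)

lemma dnls_soliton_solution:
  assumes "0 < b"
  shows "dnls_schwartz_solution (dnls_soliton b)"
  unfolding dnls_schwartz_solution_def
proof (intro conjI allI exI)
  show "schwartz (dnls_soliton b t)" for t
    using dnls_soliton_schwartz[OF assms] .
  have ld: "continuous_on UNIV (\<lambda>p. soliton_log_deriv b (snd p))"
    using sech_tanh_alg_continuous_on[OF soliton_log_deriv_mem]
    by (rule continuous_on_compose2) (auto intro: continuous_intros)
  have ld': "continuous_on UNIV (\<lambda>p. soliton_log_deriv' b (snd p))"
    unfolding soliton_log_deriv'_def tanh_def
    by (intro continuous_intros) (auto simp: less_imp_neq[OF cosh_real_pos, symmetric])
  show "continuous_on UNIV (\<lambda>p. dnls_soliton b (fst p) (snd p))"
    "continuous_on UNIV (\<lambda>p. \<i> * complex_of_real (b\<^sup>2 / 4) * dnls_soliton b (fst p) (snd p))"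
    "continuous_on UNIV (\<lambda>p. soliton_log_deriv b (snd p) * dnls_soliton b (fst p) (snd p))"
    "continuous_on UNIV (\<lambda>p. (soliton_log_deriv' b (snd p) + soliton_log_deriv b (snd p) ^ 2)
        * dnls_soliton b (fst p) (snd p))"
    by (intro ld ld' continuous_on_dnls_soliton continuous_intros)+
  show "\<i> * (\<i> * complex_of_real (b\<^sup>2 / 4) * dnls_soliton b t x)
      + (soliton_log_deriv' b x + soliton_log_deriv b x ^ 2) * dnls_soliton b t x
      + \<i> * vector_derivative (\<lambda>y. complex_of_real ((cmod (dnls_soliton b t y))\<^sup>2) * dnls_soliton b t y) (at x)
      = 0" for t x
  proof -
    let ?N = "complex_of_real (2 * b * (- b * tanh (b * x) * sech (b * x)))
      + complex_of_real (2 * b * sech (b * x)) * soliton_log_deriv b x"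
    have "vector_derivative (\<lambda>y. complex_of_real ((cmod (dnls_soliton b t y))\<^sup>2) * dnls_soliton b t y) (at x)
        = ?N * dnls_soliton b t x"
      using assms by (intro vector_derivative_at dnls_soliton_cubic_has_vector_derivative) auto
    moreover have "\<i> * (\<i> * complex_of_real (b\<^sup>2 / 4) * dnls_soliton b t x)
        + (soliton_log_deriv' b x + soliton_log_deriv b x ^ 2) * dnls_soliton b t x
        + \<i> * (?N * dnls_soliton b t x)
      = (\<i> * (\<i> * complex_of_real (b\<^sup>2 / 4)) + (soliton_log_deriv' b x + soliton_log_deriv b x ^ 2)
         + \<i> * ?N) * dnls_soliton b t x"
      by (simp add: algebra_simps)
    ultimately show ?thesis
      by (simp only: soliton_log_deriv_dnls_identity mult_zero_left)
  qed
qed (rule dnls_soliton_has_vector_derivative_t dnls_soliton_has_vector_derivative_x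
    dnls_soliton_has_vector_derivative_xx)+

lemma dnls_soliton_mass:
  assumes "0 < b"
  shows "(LINT x|lborel. (cmod (dnls_soliton b t x))\<^sup>2) = 2 * pi"
  using has_bochner_integral_integral_eq[OF has_bochner_integral_sech_scaled[OF assms]] assms
  by (simp add: norm_dnls_soliton_square)

lemma dnls_soliton_time_shift:
  "dnls_soliton b t x = exp (\<i> * complex_of_real (b\<^sup>2 / 4 * t)) * dnls_soliton b 0 x"
  by (simp add: dnls_soliton_def exp_add[symmetric] distrib_left algebra_simps)

lemma continuous_on_dnls_soliton_x: "continuous_on S (dnls_soliton b t)"
  using dnls_soliton_has_vector_derivative_x
  by (meson continuous_at_imp_continuous_on has_vector_derivative_continuous)

lemma sech_tanh_alg_mult_dnls_soliton:
  assumes "0 < b" "g \<in> sech_tanh_alg"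
  shows "integrable lborel (\<lambda>x. g x * dnls_soliton b t x)"
    and "((\<lambda>x. g x * dnls_soliton b t x) \<longlongrightarrow> 0) at_top"
    and "((\<lambda>x. g x * dnls_soliton b t x) \<longlongrightarrow> 0) at_bot"
proof -
  obtain M where M: "\<And>x. cmod (g x) \<le> M"
    using sech_tanh_alg_bounded[OF assms(2)] by blast
  then have M0: "0 \<le> M"
    using norm_ge_zero order_trans by blast
  have bound: "norm (g x * dnls_soliton b t x) \<le> M * sqrt (2 * b) * sech (b / 2 * x)" for x
    using mult_mono[OF M norm_dnls_soliton_le] assms(1) M0 by (simp add: norm_mult mult.assoc)
  have dom: "integrable lborel (\<lambda>x. M * sqrt (2 * b) * sech (b / 2 * x))"
    using integrable.intros[OF has_bochner_integral_sech_scaled[of "b / 2"]] assms(1)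
    by (intro integrable_mult_right) simp
  have "continuous_on UNIV (\<lambda>x. g x * dnls_soliton b t x)"
    by (intro continuous_on_mult sech_tanh_alg_continuous_on[OF assms(2)] continuous_on_dnls_soliton_x)
  then have "(\<lambda>x. g x * dnls_soliton b t x) \<in> borel_measurable lborel"
    using borel_measurable_continuous_onI by simp
  then show "integrable lborel (\<lambda>x. g x * dnls_soliton b t x)"
    using bound by (intro Bochner_Integration.integrable_bound[OF dom] AE_I2) (auto intro: order_trans abs_ge_self)
  have "0 < b / 2"
    using assms(1) by simp
  from sech_scaled_tendsto_0[OF this] show
    "((\<lambda>x. g x * dnls_soliton b t x) \<longlongrightarrow> 0) at_top" "((\<lambda>x. g x * dnls_soliton b t x) \<longlongrightarrow> 0) at_bot"
    by (auto intro!: Lim_null_comparison[OF always_eventually[OF allI[OF bound]]]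
        simp: tendsto_mult_right_zero)
qed

lemma has_L1_derivative_sech_tanh_alg_mult_dnls_soliton:
  assumes "0 < b" "h \<in> sech_tanh_alg" "h' \<in> sech_tanh_alg" "\<And>x. (h has_vector_derivative h' x) (at x)"
  shows "has_L1_derivative (\<lambda>x. h x * dnls_soliton b t x)
      (\<lambda>x. (h' x + h x * soliton_log_deriv b x) * dnls_soliton b t x)"
proof -
  have mem: "(\<lambda>x. h' x + h x * soliton_log_deriv b x) \<in> sech_tanh_alg"
    using assms(2,3) soliton_log_deriv_mem by (intro sech_tanh_alg.intros)
  have "((\<lambda>x. h x * dnls_soliton b t x) has_vector_derivative
      (h' x + h x * soliton_log_deriv b x) * dnls_soliton b t x) (at x)" for x
    by (rule has_vector_derivative_mult[OF assms(4) dnls_soliton_has_vector_derivative_x,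
          THEN has_vector_derivative_eq_rhs]) (simp add: algebra_simps)
  moreover have "continuous_on UNIV (\<lambda>x. (h' x + h x * soliton_log_deriv b x) * dnls_soliton b t x)"
    by (intro continuous_on_mult sech_tanh_alg_continuous_on[OF mem] continuous_on_dnls_soliton_x)
  ultimately show ?thesis
    unfolding has_L1_derivative_def
    using sech_tanh_alg_mult_dnls_soliton[OF assms(1,2)] sech_tanh_alg_mult_dnls_soliton[OF assms(1) mem]
    by auto
qed

lemma norm_sech_power_soliton_factor_le:
  assumes "0 \<le> b"
  shows "cmod (complex_of_real (- real n * tanh x * sech x ^ n) + complex_of_real (sech x ^ n) * soliton_log_deriv b x)
      \<le> real n + 2 * b"
proof -
  have "cmod (complex_of_real (- real n * tanh x * sech x ^ n) + complex_of_real (sech x ^ n) * soliton_log_deriv b x)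
      \<le> real n * \<bar>tanh x\<bar> * sech x ^ n + sech x ^ n * cmod (soliton_log_deriv b x)"
    by (rule order_trans[OF norm_triangle_ineq]) (simp add: norm_mult norm_power abs_mult sech_pos less_imp_le)
  also have "\<dots> \<le> real n * 1 * 1 + 1 * (2 * b)"
    using assms sech_pos[of x] sech_le_1[of x]
    by (intro add_mono mult_mono abs_tanh_le_1 power_le_one norm_soliton_log_deriv_le) auto
  finally show ?thesis
    by simp
qed

lemma H_half_norm_sq_sech_power_mult_dnls_soliton_ge:
  assumes b: "0 < b"
  shows "pi * b \<le> H_half_norm_sq (\<lambda>x. complex_of_real (sech x ^ n) * dnls_soliton b 0 x)
                     * (2 * arsinh (real n + 2 * b) + sqrt pi)"
proof -
  define h where "h x = complex_of_real (sech x ^ n)" for x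
  define k where "k x = complex_of_real (- real n * tanh x * sech x ^ n) + h x * soliton_log_deriv b x" for x
  define \<sigma> where "\<sigma> = 1 / (2 * (real n + 2 * b))"
  define L where "L = (real n + 2 * b) * sqrt (2 * b)"
  let ?f = "\<lambda>x. h x * dnls_soliton b 0 x"
  let ?f' = "\<lambda>x. k x * dnls_soliton b 0 x"
  have \<sigma>: "0 < \<sigma>" "1 / (2 * \<sigma>) = real n + 2 * b"
    using b by (simp_all add: \<sigma>_def)
  have k: "k \<in> sech_tanh_alg"
    unfolding k_def [abs_def] h_def using sech_power_mem_sech_tanh_alg soliton_log_deriv_mem
    by (intro sech_tanh_alg.intros)
  then obtain k' where k': "k' \<in> sech_tanh_alg" "\<And>x. (k has_vector_derivative k' x) (at x)"
    using sech_tanh_alg_has_vector_derivative by blast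
  have f: "has_L1_derivative ?f ?f'"
    using has_L1_derivative_sech_tanh_alg_mult_dnls_soliton[OF b sech_power_mem_sech_tanh_alg
        has_vector_derivative_of_real[OF has_real_derivative_sech_power]]
    by (simp add: h_def k_def)
  have f': "has_L1_derivative ?f' (\<lambda>x. (k' x + k x * soliton_log_deriv b x) * dnls_soliton b 0 x)"
    by (rule has_L1_derivative_sech_tanh_alg_mult_dnls_soliton[OF b k k'])
  have "cmod (dnls_soliton b 0 x) \<le> sqrt (2 * b)" for x
    using b sech_le_1[of "b * x"] by (simp add: norm_dnls_soliton soliton_amplitude_def mult_left_le)
  then have f'_le: "cmod (?f' x) \<le> L" for x
    unfolding L_def norm_mult k_def h_def using b norm_sech_power_soliton_factor_le[of b n x]
    by (intro mult_mono) auto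
  have f0: "cmod (?f 0) - L * \<sigma> = sqrt (2 * b) / 2"
    using b by (simp add: h_def norm_mult norm_dnls_soliton soliton_amplitude_def sech_def L_def \<sigma>_def
        field_simps add_pos_pos)
  then have "L * \<sigma> \<le> cmod (?f 0)"
    using real_sqrt_ge_zero[of "2 * b"] b by linarith
  then have "2 * pi * (cmod (?f 0) - L * \<sigma>)\<^sup>2
      \<le> H_half_norm_sq ?f * (LINT \<xi>|lborel. exp (- (\<sigma> * \<xi>)\<^sup>2) / sqrt (4 + \<xi>\<^sup>2))"
    using f unfolding has_L1_derivative_def
    by (intro H_half_norm_sq_lower_bound[OF \<sigma>(1) _ f'_le] integrable_H_half_density[OF f f']) auto
  also have "\<dots> \<le> H_half_norm_sq ?f * (2 * arsinh (real n + 2 * b) + sqrt pi)"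
    using integral_gaussian_div_sqrt_4_plus_square_le[OF \<sigma>(1)]
    unfolding \<sigma>(2) by (intro mult_left_mono H_half_norm_sq_nonneg)
  finally show ?thesis
    unfolding f0 using b by (simp add: h_def power_divide)
qed

lemma H_half_norm_sq_mult_dnls_soliton_time_invariant:
  "H_half_norm_sq (\<lambda>x. w x * dnls_soliton b t x) = H_half_norm_sq (\<lambda>x. w x * dnls_soliton b 0 x)"
proof -
  have "(\<lambda>x. w x * dnls_soliton b t x)
      = (\<lambda>x. exp (\<i> * complex_of_real (b\<^sup>2 / 4 * t)) * (w x * dnls_soliton b 0 x))"
    by (simp add: fun_eq_iff dnls_soliton_time_shift[of b t] mult_ac)
  then show ?thesis
    by (simp add: H_half_norm_sq_mult_unit)
qed

lemma interval_integral_H_half_norm_sq_mult_dnls_soliton: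
  "(LBINT t=-1..1. H_half_norm_sq (\<lambda>x. w x * dnls_soliton b t x))
     = 2 * H_half_norm_sq (\<lambda>x. w x * dnls_soliton b 0 x)"
proof -
  have "(\<lambda>t. H_half_norm_sq (\<lambda>x. w x * dnls_soliton b t x))
      = (\<lambda>t. H_half_norm_sq (\<lambda>x. w x * dnls_soliton b 0 x))"
    using H_half_norm_sq_mult_dnls_soliton_time_invariant by blast
  moreover have "(LBINT t=ereal (-1)..ereal 1. H_half_norm_sq (\<lambda>x. w x * dnls_soliton b 0 x))
      = 2 * H_half_norm_sq (\<lambda>x. w x * dnls_soliton b 0 x)"
    by simp
  ultimately show ?thesis
    by (simp add: one_ereal_def)
qed

theorem proposition1p10:
  shows "\<exists>q :: nat \<Rightarrow> real \<Rightarrow> real \<Rightarrow> complex.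
     (\<forall>n. dnls_schwartz_solution (q n)) \<and>
     (\<forall>n t. (LINT x|lborel. (cmod (q n t x))\<^sup>2) = 2 * pi) \<and>
     filterlim (\<lambda>n. LBINT t=-1..1.
                   H_half_norm_sq (\<lambda>x. complex_of_real (sech x ^ 12) * q n t x))
               at_top sequentially"
proof (intro exI[of _ "\<lambda>n. dnls_soliton (real n + 1)"] conjI allI)
  fix n :: nat and t :: real
  show "dnls_schwartz_solution (dnls_soliton (real n + 1))"
    by (rule dnls_soliton_solution) simp
  show "(LINT x|lborel. (cmod (dnls_soliton (real n + 1) t x))\<^sup>2) = 2 * pi"
    by (rule dnls_soliton_mass) simp
next
  have bound: "2 * (pi * b / (2 * arsinh (12 + 2 * b) + sqrt pi))
      \<le> (LBINT t=-1..1. H_half_norm_sq (\<lambda>x. complex_of_real (sech x ^ 12) * dnls_soliton b t x))"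
    if "0 < b" for b
    using H_half_norm_sq_sech_power_mult_dnls_soliton_ge[OF that, of 12] that
    by (simp add: interval_integral_H_half_norm_sq_mult_dnls_soliton add_pos_pos pos_divide_le_eq)
  have "filterlim (\<lambda>n. 2 * (pi * (real n + 1) / (2 * arsinh (12 + 2 * (real n + 1)) + sqrt pi)))
      at_top sequentially"
    unfolding arsinh_real_def by real_asymp
  then show "filterlim (\<lambda>n. LBINT t=-1..1.
      H_half_norm_sq (\<lambda>x. complex_of_real (sech x ^ 12) * dnls_soliton (real n + 1) t x)) at_top sequentially"
    by (rule filterlim_at_top_mono) (intro always_eventually allI bound, simp)
qed

end
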